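(* Let $\mathcal{A}\in\mathbb{C}^{n\times n\times n\times n}$ be a CPS tensor. Then $\langle X,\mathcal{A}X\rangle\ge0$ for all Hermitian positive semidefinite $X\in\mathbb{C}^{n\times n}$ if and only if $\langle X,\mathcal{A}X\rangle\ge0$ for all real symmetric positive semidefinite $X\in\mathbb{R}^{n\times n}$.
   Context: A tensor $\mathcal{A}\in\mathbb{C}^{n\times n\times n\times n}$ is conjugate partial-symmetric (CPS) if $\mathcal{A}_{ijkl}=\overline{\mathcal{A}_{klij}}$ and $\mathcal{A}_{ijkl}=\mathcal{A}_{jikl}=\mathcal{A}_{ijlk}$ for all indices. For $X\in\mathbb{C}^{n\times n}$, $\langle X,\mathcal{A}X\rangle=\sum_{i,j,k,l}\mathcal{A}_{ijkl}X_{kl}\overline{X_{ij}}$. *)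

theory Defs
  imports "HOL-Analysis.Analysis" "HOL-Library.Complex_Order"
begin

text \<open>Fourth-order tensors in C^{n x n x n x n}, index set the finite type 'n.
  The order on complex numbers (HOL-Library.Complex_Order): z \<ge> 0 iff z is real and nonnegative.\<close>

type_synonym 'n tensor4 = "'n \<Rightarrow> 'n \<Rightarrow> 'n \<Rightarrow> 'n \<Rightarrow> complex"

definition CPS :: "('n::finite) tensor4 \<Rightarrow> bool" where
  "CPS A \<longleftrightarrow> (\<forall>i j k l. A i j k l = cnj (A k l i j) \<and> A i j k l = A j i k l \<and> A i j k l = A i j l k)"

definition tform :: "('n::finite) tensor4 \<Rightarrow> complex^'n^'n \<Rightarrow> complex" where
  "tform A X = (\<Sum>i\<in>UNIV. \<Sum>j\<in>UNIV. \<Sum>k\<in>UNIV. \<Sum>l\<in>UNIV. A i j k l * X $ k $ l * cnj (X $ i $ j))"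

definition hermitian_psd :: "complex^'n^'n \<Rightarrow> bool" where
  "hermitian_psd X \<longleftrightarrow> (\<forall>i j. X $ i $ j = cnj (X $ j $ i)) \<and>
     (\<forall>v :: complex^'n. (\<Sum>i\<in>UNIV. \<Sum>j\<in>UNIV. cnj (v $ i) * X $ i $ j * v $ j) \<ge> 0)"

definition real_sym_psd :: "real^'n^'n \<Rightarrow> bool" where
  "real_sym_psd X \<longleftrightarrow> (\<forall>i j. X $ i $ j = X $ j $ i) \<and>
     (\<forall>v :: real^'n. (\<Sum>i\<in>UNIV. \<Sum>j\<in>UNIV. v $ i * X $ i $ j * v $ j) \<ge> 0)"

definition cmat_of_real :: "real^'n^'n \<Rightarrow> complex^'n^'n" where
  "cmat_of_real X = (\<chi> i j. complex_of_real (X $ i $ j))"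

end

theory Submission
  imports Defs
begin

text \<open>The imaginary part of a Hermitian matrix is antisymmetric, so it is annihilated by any
  symmetric weight. Since a CPS tensor is symmetric in each index pair, the form \<open>\<langle>X, \<A>X\<rangle>\<close> of a
  Hermitian \<open>X\<close> equals that of its real part \<open>Re X\<close>, and \<open>Re X\<close> is real symmetric positive
  semidefinite whenever \<open>X\<close> is Hermitian positive semidefinite (test it on real vectors).
  Conversely a real symmetric positive semidefinite matrix is a Hermitian positive semidefinite one.\<close>

definition mat_Re :: "complex^'n^'m \<Rightarrow> real^'n^'m" where
  "mat_Re X = (\<chi> i j. Re (X $ i $ j))"

lemma double_sum_symmetric_hermitian_eq_Re:
  fixes f Y :: "'a \<Rightarrow> 'a \<Rightarrow> complex"
  assumes f_sym: "\<And>i j. f i j = f j i" and Y_herm: "\<And>i j. Y i j = cnj (Y j i)"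
  shows "(\<Sum>i\<in>S. \<Sum>j\<in>S. f i j * Y i j) = (\<Sum>i\<in>S. \<Sum>j\<in>S. f i j * complex_of_real (Re (Y i j)))"
proof -
  let ?S = "\<Sum>i\<in>S. \<Sum>j\<in>S. f i j * Y i j"
  have swapped: "?S = (\<Sum>i\<in>S. \<Sum>j\<in>S. f i j * Y j i)"
    by (subst sum.swap) (simp add: f_sym)
  have "2 * ?S = (\<Sum>i\<in>S. \<Sum>j\<in>S. f i j * (Y i j + Y j i))"
    by (subst mult_2, subst (2) swapped) (simp add: sum.distrib[symmetric] distrib_left)
  also have "\<dots> = (\<Sum>i\<in>S. \<Sum>j\<in>S. f i j * (2 * complex_of_real (Re (Y i j))))"
  proof -
    have "Y i j + Y j i = 2 * complex_of_real (Re (Y i j))" for i j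
      using complex_add_cnj[of "Y i j"] Y_herm[of j i] by simp
    then show ?thesis by simp
  qed
  also have "\<dots> = 2 * (\<Sum>i\<in>S. \<Sum>j\<in>S. f i j * complex_of_real (Re (Y i j)))"
    by (simp add: sum_distrib_left algebra_simps)
  finally show ?thesis by simp
qed

lemma tform_hermitian_eq_tform_mat_Re:
  fixes A :: "('n::finite) tensor4"
  assumes "CPS A" and X_herm: "\<And>i j. X $ i $ j = cnj (X $ j $ i)"
  shows "tform A X = tform A (cmat_of_real (mat_Re X))"
proof -
  have sym_kl: "A i j k l = A i j l k" and sym_ij: "A i j k l = A j i k l" for i j k l
    using \<open>CPS A\<close> unfolding CPS_def by blast+
  define B where "B i j = (\<Sum>k\<in>UNIV. \<Sum>l\<in>UNIV. A i j k l * X $ k $ l)" for i j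
  have B_Re: "B i j = (\<Sum>k\<in>UNIV. \<Sum>l\<in>UNIV. A i j k l * complex_of_real (Re (X $ k $ l)))" for i j
    unfolding B_def using sym_kl X_herm by (rule double_sum_symmetric_hermitian_eq_Re)
  have B_sym: "B i j = B j i" for i j
    unfolding B_def using sym_ij by simp
  have "tform A X = (\<Sum>i\<in>UNIV. \<Sum>j\<in>UNIV. B i j * cnj (X $ i $ j))"
    unfolding tform_def B_def by (simp add: sum_distrib_right mult.assoc)
  also have "\<dots> = (\<Sum>i\<in>UNIV. \<Sum>j\<in>UNIV. B i j * complex_of_real (Re (cnj (X $ i $ j))))"
    using B_sym by (rule double_sum_symmetric_hermitian_eq_Re) (rule arg_cong[where f=cnj], rule X_herm)
  also have "\<dots> = tform A (cmat_of_real (mat_Re X))"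
    unfolding tform_def cmat_of_real_def mat_Re_def B_Re by (simp add: sum_distrib_right mult.assoc)
  finally show ?thesis .
qed

lemma hermitian_psd_cmat_of_real:
  fixes X :: "real^'n^'n"
  assumes "real_sym_psd X"
  shows "hermitian_psd (cmat_of_real X)"
  unfolding hermitian_psd_def
proof (intro conjI allI)
  have X_sym: "\<And>i j. X $ i $ j = X $ j $ i"
    and X_psd: "\<And>v. (\<Sum>i\<in>UNIV. \<Sum>j\<in>UNIV. v $ i * X $ i $ j * v $ j) \<ge> 0"
    using assms unfolding real_sym_psd_def by blast+
  show "cmat_of_real X $ i $ j = cnj (cmat_of_real X $ j $ i)" for i j
    unfolding cmat_of_real_def using X_sym by simp
  fix v :: "complex^'n"
  define a where "a = (\<chi> i. Re (v $ i))"
  define b where "b = (\<chi> i. Im (v $ i))"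
  let ?q = "\<lambda>u w. \<Sum>i\<in>UNIV. \<Sum>j\<in>UNIV. X $ i $ j * (u $ i * w $ j)"
  let ?S = "\<Sum>i\<in>UNIV. \<Sum>j\<in>UNIV. cnj (v $ i) * cmat_of_real X $ i $ j * v $ j"
  have Re_S: "Re ?S = ?q a a + ?q b b"
    unfolding a_def b_def cmat_of_real_def
    by (simp add: Re_sum sum.distrib[symmetric] algebra_simps)
  have Im_S: "Im ?S = ?q a b - ?q b a"
    unfolding a_def b_def cmat_of_real_def
    by (simp add: Im_sum sum_subtractf[symmetric] algebra_simps)
  have "?q b a = ?q a b"
    by (subst sum.swap) (simp add: X_sym mult.commute)
  moreover have "?q a a \<ge> 0" "?q b b \<ge> 0"
    using X_psd[of a] X_psd[of b] by (simp_all add: algebra_simps)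
  ultimately show "?S \<ge> 0"
    unfolding less_eq_complex_def using Re_S Im_S by simp
qed

lemma real_sym_psd_mat_Re:
  fixes X :: "complex^'n^'n"
  assumes "hermitian_psd X"
  shows "real_sym_psd (mat_Re X)"
  unfolding real_sym_psd_def
proof (intro conjI allI)
  have X_herm: "\<And>i j. X $ i $ j = cnj (X $ j $ i)"
    and X_psd: "\<And>v. (\<Sum>i\<in>UNIV. \<Sum>j\<in>UNIV. cnj (v $ i) * X $ i $ j * v $ j) \<ge> 0"
    using assms unfolding hermitian_psd_def by blast+
  show "mat_Re X $ i $ j = mat_Re X $ j $ i" for i j
    using X_herm[of i j] by (simp add: mat_Re_def)
  fix v :: "real^'n"
  have "0 \<le> Re (\<Sum>i\<in>UNIV. \<Sum>j\<in>UNIV. cnj ((\<chi> i. complex_of_real (v $ i)) $ i) * X $ i $ j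
                                       * (\<chi> i. complex_of_real (v $ i)) $ j)"
    using X_psd[of "\<chi> i. complex_of_real (v $ i)"] unfolding less_eq_complex_def by simp
  then show "0 \<le> (\<Sum>i\<in>UNIV. \<Sum>j\<in>UNIV. v $ i * mat_Re X $ i $ j * v $ j)"
    by (simp add: Re_sum mat_Re_def)
qed

theorem corollary5p4:
  fixes A :: "('n::finite) tensor4"
  assumes "CPS A"
  shows "(\<forall>X :: complex^'n^'n. hermitian_psd X \<longrightarrow> tform A X \<ge> 0) \<longleftrightarrow>
         (\<forall>X :: real^'n^'n. real_sym_psd X \<longrightarrow> tform A (cmat_of_real X) \<ge> 0)"
proof
  assume "\<forall>X :: complex^'n^'n. hermitian_psd X \<longrightarrow> tform A X \<ge> 0"
  then show "\<forall>X :: real^'n^'n. real_sym_psd X \<longrightarrow> tform A (cmat_of_real X) \<ge> 0"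
    using hermitian_psd_cmat_of_real by blast
next
  assume real_nonneg: "\<forall>X :: real^'n^'n. real_sym_psd X \<longrightarrow> tform A (cmat_of_real X) \<ge> 0"
  show "\<forall>X :: complex^'n^'n. hermitian_psd X \<longrightarrow> tform A X \<ge> 0"
  proof (intro allI impI)
    fix X :: "complex^'n^'n"
    assume X: "hermitian_psd X"
    then have "tform A X = tform A (cmat_of_real (mat_Re X))"
      using \<open>CPS A\<close> tform_hermitian_eq_tform_mat_Re unfolding hermitian_psd_def by blast
    then show "tform A X \<ge> 0"
      using real_nonneg real_sym_psd_mat_Re[OF X] by simp
  qed
qed

end
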